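(* Let $k_1,k_2,k_3\ge1$, let $G$ be the grid graph on $\{0,\dots,k_1\}\times\{0,\dots,k_2\}\times\{0,\dots,k_3\}$ (adjacency: differing by $1$ in exactly one coordinate), let $\mathcal B=\{B_1,\dots,B_m\}$ with $B_i=[a_i',a_i'']\times[b_i',b_i'']\times[c_i',c_i'']\subseteq\mathbb R^3$ boxes with integer endpoints $0\le a_i'<a_i''\le k_1$, $0\le b_i'<b_i''\le k_2$, $0\le c_i'<c_i''\le k_3$, and let $G_i$ be the subgraph of $G$ induced by the vertices in $B_i$. Let $\widetilde G$ be the graph with vertex set $V(G)\cup\{(u,i):1\le i\le m,\ u\in V(G_i)\}$ and edges: all edges of $G$; the edges $(u,i)(w,i)$ for $uw$ an edge of $G_i$; and the edges $u\,(u,i)$ for $u\in V(G_i)$. Let $\alpha=(0,0,0)$ and let $\omega=\omega(\mathcal B)$ be the maximum number of pairwise intersecting boxes of $\mathcal B$. Then every vertex of the pointed median graph $\widetilde G_\alpha$ has out-degree at most $\omega+3$. In particular, the maximum degree of $\widetilde G$ is at most $\omega+6$ and the clique number of the pointed contact graph $\Gamma_\alpha(\widetilde G)$ is at most $\omega+3$.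
   Context: $\widetilde G$ is a median graph (connected, with $I(x,y)\cap I(y,z)\cap I(z,x)$ a single vertex for all $x,y,z$, where $I(u,v)$ is the set of vertices on shortest $u$–$v$ paths). The pointed median graph $\widetilde G_\alpha$ is $\widetilde G$ with each edge $xy$ directed from $x$ to $y$ iff $d(x,\alpha)<d(y,\alpha)$, $d$ the graph distance; the tail is the origin. The Djoković–Winkler relation $\Theta$: $xy\,\Theta\,zw$ iff $d(x,z)+d(y,w)\ne d(x,w)+d(y,z)$, an equivalence relation on edges of a median graph. Two $\Theta$-classes cross if some 4-cycle has two opposite edges in one and the other two in the other. The pointed contact graph $\Gamma_\alpha(\widetilde G)$ has the $\Theta$-classes as vertices, two distinct classes adjacent iff they cross or there exist edges, one from each class, which (directed as in $\widetilde G_\alpha$) have the same origin and lie in no common 4-cycle. *)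

theory Defs
  imports Complex_Main
begin

type_synonym pt = "int \<times> int \<times> int"
type_synonym box = "pt \<times> pt"   (* ((a',b',c'),(a'',b'',c'')) *)
type_synonym vtx = "pt \<times> nat option"  (* (u,None) = u in V(G); (u,Some i) = copy (u,i) *)

definition grid_V :: "int \<Rightarrow> int \<Rightarrow> int \<Rightarrow> pt set" where
  "grid_V k1 k2 k3 = {(x,y,z). 0 \<le> x \<and> x \<le> k1 \<and> 0 \<le> y \<and> y \<le> k2 \<and> 0 \<le> z \<and> z \<le> k3}"

definition grid_adj :: "pt \<Rightarrow> pt \<Rightarrow> bool" where
  "grid_adj u v = (case u of (x,y,z) \<Rightarrow> case v of (x',y',z') \<Rightarrow>
      (\<bar>x - x'\<bar> = 1 \<and> y = y' \<and> z = z') \<or>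
      (x = x' \<and> \<bar>y - y'\<bar> = 1 \<and> z = z') \<or>
      (x = x' \<and> y = y' \<and> \<bar>z - z'\<bar> = 1))"

definition valid_box :: "int \<Rightarrow> int \<Rightarrow> int \<Rightarrow> box \<Rightarrow> bool" where
  "valid_box k1 k2 k3 b = (case b of ((a1,b1,c1),(a2,b2,c2)) \<Rightarrow>
      0 \<le> a1 \<and> a1 < a2 \<and> a2 \<le> k1 \<and>
      0 \<le> b1 \<and> b1 < b2 \<and> b2 \<le> k2 \<and>
      0 \<le> c1 \<and> c1 < c2 \<and> c2 \<le> k3)"

definition box_set :: "box \<Rightarrow> (real \<times> real \<times> real) set" where
  "box_set b = (case b of ((a1,b1,c1),(a2,b2,c2)) \<Rightarrow>
      {(x,y,z). of_int a1 \<le> x \<and> x \<le> of_int a2 \<and>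
                of_int b1 \<le> y \<and> y \<le> of_int b2 \<and>
                of_int c1 \<le> z \<and> z \<le> of_int c2})"

definition pt_real :: "pt \<Rightarrow> real \<times> real \<times> real" where
  "pt_real u = (case u of (x,y,z) \<Rightarrow> (of_int x, of_int y, of_int z))"

definition box_pts :: "int \<Rightarrow> int \<Rightarrow> int \<Rightarrow> box \<Rightarrow> pt set" where
  "box_pts k1 k2 k3 b = {u \<in> grid_V k1 k2 k3. pt_real u \<in> box_set b}"

definition omega :: "box list \<Rightarrow> nat" where
  "omega B = Max {card I | I. I \<subseteq> {..<length B} \<and>
      (\<forall>i\<in>I. \<forall>j\<in>I. i \<noteq> j \<longrightarrow> box_set (B!i) \<inter> box_set (B!j) \<noteq> {})}"

definition tV :: "int \<Rightarrow> int \<Rightarrow> int \<Rightarrow> box list \<Rightarrow> vtx set" where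
  "tV k1 k2 k3 B = {(u, None) | u. u \<in> grid_V k1 k2 k3} \<union>
     {(u, Some i) | u i. i < length B \<and> u \<in> box_pts k1 k2 k3 (B!i)}"

definition tadj :: "int \<Rightarrow> int \<Rightarrow> int \<Rightarrow> box list \<Rightarrow> vtx \<Rightarrow> vtx \<Rightarrow> bool" where
  "tadj k1 k2 k3 B v w = (v \<in> tV k1 k2 k3 B \<and> w \<in> tV k1 k2 k3 B \<and>
     (case v of
        (u, None) \<Rightarrow> (case w of (u', None) \<Rightarrow> grid_adj u u' | (u', Some j) \<Rightarrow> u = u')
      | (u, Some i) \<Rightarrow> (case w of (u', None) \<Rightarrow> u = u' | (u', Some j) \<Rightarrow> i = j \<and> grid_adj u u')))"

definition gdist :: "('a \<Rightarrow> 'a \<Rightarrow> bool) \<Rightarrow> 'a \<Rightarrow> 'a \<Rightarrow> nat" where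
  "gdist adj x y = (LEAST n. \<exists>p. length p = Suc n \<and> hd p = x \<and> last p = y \<and>
       (\<forall>i<n. adj (p!i) (p!Suc i)))"

definition degree :: "('a \<Rightarrow> 'a \<Rightarrow> bool) \<Rightarrow> 'a \<Rightarrow> nat" where
  "degree adj x = card {y. adj x y}"

definition out_deg :: "('a \<Rightarrow> 'a \<Rightarrow> bool) \<Rightarrow> 'a \<Rightarrow> 'a \<Rightarrow> nat" where
  "out_deg adj a x = card {y. adj x y \<and> gdist adj x a < gdist adj y a}"

text \<open>Edges are represented as ordered pairs (both orientations present).\<close>
definition dedges :: "('a \<Rightarrow> 'a \<Rightarrow> bool) \<Rightarrow> ('a \<times> 'a) set" where
  "dedges adj = {(x,y). adj x y}"

definition theta :: "('a \<Rightarrow> 'a \<Rightarrow> bool) \<Rightarrow> 'a \<times> 'a \<Rightarrow> 'a \<times> 'a \<Rightarrow> bool" where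
  "theta adj e f = (case e of (x,y) \<Rightarrow> case f of (z,w) \<Rightarrow>
      gdist adj x z + gdist adj y w \<noteq> gdist adj x w + gdist adj y z)"

definition theta_classes :: "('a \<Rightarrow> 'a \<Rightarrow> bool) \<Rightarrow> ('a \<times> 'a) set set" where
  "theta_classes adj = dedges adj // {(e,f). e \<in> dedges adj \<and> f \<in> dedges adj \<and> theta adj e f}"

definition is_4cycle :: "('a \<Rightarrow> 'a \<Rightarrow> bool) \<Rightarrow> 'a \<Rightarrow> 'a \<Rightarrow> 'a \<Rightarrow> 'a \<Rightarrow> bool" where
  "is_4cycle adj x1 x2 x3 x4 = (distinct [x1,x2,x3,x4] \<and>
      adj x1 x2 \<and> adj x2 x3 \<and> adj x3 x4 \<and> adj x4 x1)"

definition crosses :: "('a \<Rightarrow> 'a \<Rightarrow> bool) \<Rightarrow> ('a \<times> 'a) set \<Rightarrow> ('a \<times> 'a) set \<Rightarrow> bool" where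
  "crosses adj C D = (\<exists>x1 x2 x3 x4. is_4cycle adj x1 x2 x3 x4 \<and>
      (x1,x2) \<in> C \<and> (x3,x4) \<in> C \<and> (x2,x3) \<in> D \<and> (x4,x1) \<in> D)"

definition common_4cycle :: "('a \<Rightarrow> 'a \<Rightarrow> bool) \<Rightarrow> 'a \<times> 'a \<Rightarrow> 'a \<times> 'a \<Rightarrow> bool" where
  "common_4cycle adj e f = (\<exists>x1 x2 x3 x4. is_4cycle adj x1 x2 x3 x4 \<and>
      {fst e, snd e} \<in> {{x1,x2},{x2,x3},{x3,x4},{x4,x1}} \<and>
      {fst f, snd f} \<in> {{x1,x2},{x2,x3},{x3,x4},{x4,x1}})"

definition contact_adj :: "('a \<Rightarrow> 'a \<Rightarrow> bool) \<Rightarrow> 'a \<Rightarrow> ('a \<times> 'a) set \<Rightarrow> ('a \<times> 'a) set \<Rightarrow> bool" where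
  "contact_adj adj a C D = (C \<noteq> D \<and> (crosses adj C D \<or>
     (\<exists>s x y. (s,x) \<in> C \<and> (s,y) \<in> D \<and>
        gdist adj s a < gdist adj x a \<and> gdist adj s a < gdist adj y a \<and>
        \<not> common_4cycle adj (s,x) (s,y))))"

end

theory Submission
  imports Defs
begin

text \<open>
  Distances in \<open>G\<close>-tilde are explicit: \<open>d(v, w)\<close> is the \<open>\<ell>\<^sub>1\<close>-distance of the underlying grid
  points plus 0, 1 or 2 according as \<open>v\<close> and \<open>w\<close> lie in the same layer, exactly one of them lies
  in the base layer \<open>G\<close>, or they are copies in two different boxes. Consequently the \<open>\<Theta>\<close>-classes
  are hyperplanes: one for each coordinate direction and each slab between consecutive values of
  that coordinate, and one for each box \<open>B\<^sub>i\<close> (the edges \<open>u (u,i)\<close>). Two distinct classes in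
  contact never have the same direction (one of the three coordinates, or a box): no 4-cycle uses a
  single direction, and a vertex has at most one edge pointing away from \<open>\<alpha>\<close> in each direction.
  So a clique of \<open>\<Gamma>\<^sub>\<alpha>\<close> uses each coordinate direction at most once, and its box classes come
  from boxes that pairwise share a grid point. The degree bounds are a direct
  count: a vertex has at most six (three outgoing) neighbours in its own layer, and its
  neighbours at the same grid point are bounded by the number of boxes containing that point.
\<close>

section \<open>Graph distance from a metric with descent\<close>

lemma metric_le_path_length:
  fixes D :: "'a \<Rightarrow> 'a \<Rightarrow> int"
  assumes edge: "\<And>x y. adj x y \<Longrightarrow> D x y \<le> 1"
    and triangle: "\<And>x y z. D x z \<le> D x y + D y z" and diag: "\<And>x. D x x = 0"
    and p: "length p = Suc n" "\<forall>i<n. adj (p!i) (p!Suc i)"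
  shows "D (hd p) (last p) \<le> int n"
proof -
  have "D (hd p) (p!i) \<le> int i" if "i \<le> n" for i
    using that
  proof (induction i)
    case 0
    then show ?case using p(1) diag by (cases p) auto
  next
    case (Suc i)
    have "D (hd p) (p!Suc i) \<le> D (hd p) (p!i) + D (p!i) (p!Suc i)" by (rule triangle)
    also have "\<dots> \<le> D (hd p) (p!i) + 1" using edge p(2) Suc.prems by simp
    finally show ?case using Suc by simp
  qed
  moreover have "last p = p!n" using p(1) by (cases p rule: rev_cases) auto
  ultimately show ?thesis by simp
qed

lemma descent_path:
  fixes D :: "'a \<Rightarrow> 'a \<Rightarrow> int"
  assumes nonneg: "\<And>x. 0 \<le> D x w" and diag: "D w w = 0"
    and descent: "\<And>x. x \<in> V \<Longrightarrow> x \<noteq> w \<Longrightarrow> \<exists>x'. x' \<in> V \<and> adj x x' \<and> D x' w = D x w - 1"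
  shows "x \<in> V \<Longrightarrow> D x w = int n \<Longrightarrow>
    \<exists>p. length p = Suc n \<and> hd p = x \<and> last p = w \<and> (\<forall>i<n. adj (p!i) (p!Suc i))"
proof (induction n arbitrary: x)
  case 0
  have "x = w"
  proof (rule ccontr)
    assume "x \<noteq> w"
    then obtain x' where "D x' w = D x w - 1" using descent 0 by blast
    then show False using nonneg[of x'] 0 by simp
  qed
  then show ?case by (intro exI[of _ "[x]"]) auto
next
  case (Suc n)
  then have "x \<noteq> w" using diag by auto
  then obtain x' where x': "x' \<in> V" "adj x x'" "D x' w = D x w - 1"
    using descent Suc.prems(1) by blast
  then have "D x' w = int n" using Suc.prems(2) by simp
  then obtain p where p: "length p = Suc n" "hd p = x'" "last p = w" "\<forall>i<n. adj (p!i) (p!Suc i)"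
    using Suc.IH[OF x'(1) \<open>D x' w = int n\<close>] by blast
  have "p \<noteq> []" using p(1) by auto
  have "adj ((x # p)!i) ((x # p)!Suc i)" if "i < Suc n" for i
    using that p x'(2) \<open>p \<noteq> []\<close> by (cases i) (auto simp: hd_conv_nth)
  then show ?case using p by (intro exI[of _ "x # p"]) auto
qed

lemma gdist_eq_metric:
  fixes D :: "'a \<Rightarrow> 'a \<Rightarrow> int"
  assumes edge: "\<And>x y. adj x y \<Longrightarrow> D x y \<le> 1"
    and triangle: "\<And>x y z. D x z \<le> D x y + D y z" and diag: "\<And>x. D x x = 0"
    and nonneg: "\<And>x. 0 \<le> D x w"
    and descent: "\<And>x. x \<in> V \<Longrightarrow> x \<noteq> w \<Longrightarrow> \<exists>x'. x' \<in> V \<and> adj x x' \<and> D x' w = D x w - 1"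
    and "x \<in> V"
  shows "gdist adj x w = nat (D x w)"
  unfolding gdist_def
proof (rule Least_equality)
  show "\<exists>p. length p = Suc (nat (D x w)) \<and> hd p = x \<and> last p = w \<and>
      (\<forall>i<nat (D x w). adj (p!i) (p!Suc i))"
    using descent_path[of D w V adj, OF nonneg diag descent \<open>x \<in> V\<close>] nonneg[of x] by simp
next
  fix n assume "\<exists>p. length p = Suc n \<and> hd p = x \<and> last p = w \<and> (\<forall>i<n. adj (p!i) (p!Suc i))"
  then obtain p where "length p = Suc n" "hd p = x" "last p = w" "\<forall>i<n. adj (p!i) (p!Suc i)"
    by blast
  then show "nat (D x w) \<le> n"
    using metric_le_path_length[where adj=adj and D=D and p=p and n=n, OF edge triangle diag] by simp
qed

section \<open>The distance of \<open>G\<close>-tilde\<close>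

definition layer_dist :: "nat option \<Rightarrow> nat option \<Rightarrow> int" where
  "layer_dist p q = (if p = q then 0 else if p = None \<or> q = None then 1 else 2)"

definition tdist :: "vtx \<Rightarrow> vtx \<Rightarrow> int" where
  "tdist v w = (case v of ((a,b,c),p) \<Rightarrow> case w of ((a',b',c'),q) \<Rightarrow>
     \<bar>a - a'\<bar> + \<bar>b - b'\<bar> + \<bar>c - c'\<bar> + layer_dist p q)"

definition in_box :: "pt \<Rightarrow> box \<Rightarrow> bool" where
  "in_box u bx = (case u of (x,y,z) \<Rightarrow> case bx of ((a1,b1,c1),(a2,b2,c2)) \<Rightarrow>
      a1 \<le> x \<and> x \<le> a2 \<and> b1 \<le> y \<and> y \<le> b2 \<and> c1 \<le> z \<and> z \<le> c2)"

lemma tdist_simp: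
  "tdist ((a,b,c),p) ((a',b',c'),q) = \<bar>a - a'\<bar> + \<bar>b - b'\<bar> + \<bar>c - c'\<bar> + layer_dist p q"
  by (simp add: tdist_def)

lemma tdist_self: "tdist v v = 0"
  by (cases v) (auto simp: tdist_def layer_dist_def)

lemma tdist_nonneg: "0 \<le> tdist v w"
  by (cases v; cases w) (auto simp: tdist_def layer_dist_def)

lemma tdist_triangle: "tdist x z \<le> tdist x y + tdist y z"
proof -
  have abs_triangle: "\<bar>s - u\<bar> \<le> \<bar>s - t\<bar> + \<bar>t - u\<bar>" for s t u :: int
    by arith
  obtain a b c p a' b' c' q a'' b'' c'' r
    where xyz: "x = ((a,b,c),p)" "y = ((a',b',c'),q)" "z = ((a'',b'',c''),r)"
    by (metis prod.exhaust)
  have "layer_dist p r \<le> layer_dist p q + layer_dist q r"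
    by (auto simp: layer_dist_def)
  then show ?thesis
    unfolding xyz tdist_simp
    using abs_triangle[of a a'' a'] abs_triangle[of b b'' b'] abs_triangle[of c c'' c'] by linarith
qed

lemma grid_V_iff:
  "(a,b,c) \<in> grid_V k1 k2 k3 \<longleftrightarrow> 0 \<le> a \<and> a \<le> k1 \<and> 0 \<le> b \<and> b \<le> k2 \<and> 0 \<le> c \<and> c \<le> k3"
  by (simp add: grid_V_def)

lemma grid_adj_iff: "grid_adj (a,b,c) (a',b',c') \<longleftrightarrow>
   (\<bar>a - a'\<bar> = 1 \<and> b = b' \<and> c = c') \<or> (a = a' \<and> \<bar>b - b'\<bar> = 1 \<and> c = c') \<or>
   (a = a' \<and> b = b' \<and> \<bar>c - c'\<bar> = 1)"
  by (simp add: grid_adj_def)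

lemma box_pts_iff: "u \<in> box_pts k1 k2 k3 bx \<longleftrightarrow> u \<in> grid_V k1 k2 k3 \<and> in_box u bx"
  by (cases u; cases bx) (auto simp: box_pts_def box_set_def pt_real_def in_box_def)

lemma tV_None_iff: "(u, None) \<in> tV k1 k2 k3 B \<longleftrightarrow> u \<in> grid_V k1 k2 k3"
  by (cases u) (auto simp: tV_def)

lemma tV_Some_iff:
  "(u, Some i) \<in> tV k1 k2 k3 B \<longleftrightarrow> i < length B \<and> u \<in> grid_V k1 k2 k3 \<and> in_box u (B!i)"
  by (cases u) (auto simp: tV_def box_pts_iff)

lemma tV_grid_V: "(u, p) \<in> tV k1 k2 k3 B \<Longrightarrow> u \<in> grid_V k1 k2 k3"
  by (cases p) (simp_all add: tV_None_iff tV_Some_iff)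

lemma tV_Some_box_set: "(u, Some i) \<in> tV k1 k2 k3 B \<Longrightarrow> i < length B \<and> pt_real u \<in> box_set (B!i)"
  by (auto simp: tV_def box_pts_def)

lemma tadj_iff: "tadj k1 k2 k3 B (u,p) (u',q) \<longleftrightarrow>
   (u,p) \<in> tV k1 k2 k3 B \<and> (u',q) \<in> tV k1 k2 k3 B \<and>
   ((p = q \<and> grid_adj u u') \<or> (u = u' \<and> p \<noteq> q \<and> (p = None \<or> q = None)))"
  by (cases u; cases u'; cases p; cases q) (auto simp: tadj_def grid_adj_def)

lemma tadj_in_tV: "tadj k1 k2 k3 B v w \<Longrightarrow> v \<in> tV k1 k2 k3 B \<and> w \<in> tV k1 k2 k3 B"
  by (simp add: tadj_def)

lemma tadj_tdist: "tadj k1 k2 k3 B v w \<Longrightarrow> tdist v w = 1"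
  by (cases v; cases w) (auto simp: tadj_iff grid_adj_def tdist_def layer_dist_def)

lemma grid_step_towards:
  fixes a b c a' b' c' :: int
  assumes "(a,b,c) \<noteq> (a',b',c')"
  shows "\<exists>a'' b'' c''. grid_adj (a,b,c) (a'',b'',c'') \<and>
     min a a' \<le> a'' \<and> a'' \<le> max a a' \<and> min b b' \<le> b'' \<and> b'' \<le> max b b' \<and>
     min c c' \<le> c'' \<and> c'' \<le> max c c' \<and>
     \<bar>a'' - a'\<bar> + \<bar>b'' - b'\<bar> + \<bar>c'' - c'\<bar> = \<bar>a - a'\<bar> + \<bar>b - b'\<bar> + \<bar>c - c'\<bar> - 1"
proof -
  consider "a < a'" | "a > a'" | "a = a'" "b < b'" | "a = a'" "b > b'"
    | "a = a'" "b = b'" "c < c'" | "a = a'" "b = b'" "c > c'"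
    using assms by fastforce
  then show ?thesis
  proof cases
    case 1 then show ?thesis by (intro exI[of _ "a+1"] exI[of _ b] exI[of _ c]) (auto simp: grid_adj_iff)
  next
    case 2 then show ?thesis by (intro exI[of _ "a-1"] exI[of _ b] exI[of _ c]) (auto simp: grid_adj_iff)
  next
    case 3 then show ?thesis by (intro exI[of _ a] exI[of _ "b+1"] exI[of _ c]) (auto simp: grid_adj_iff)
  next
    case 4 then show ?thesis by (intro exI[of _ a] exI[of _ "b-1"] exI[of _ c]) (auto simp: grid_adj_iff)
  next
    case 5 then show ?thesis by (intro exI[of _ a] exI[of _ b] exI[of _ "c+1"]) (auto simp: grid_adj_iff)
  next
    case 6 then show ?thesis by (intro exI[of _ a] exI[of _ b] exI[of _ "c-1"]) (auto simp: grid_adj_iff)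
  qed
qed

lemma between_bounds:
  fixes x y z lo hi :: "'a :: linorder"
  shows "lo \<le> x \<Longrightarrow> x \<le> hi \<Longrightarrow> lo \<le> y \<Longrightarrow> y \<le> hi \<Longrightarrow> min x y \<le> z \<Longrightarrow> z \<le> max x y \<Longrightarrow>
    lo \<le> z \<and> z \<le> hi"
  by (auto simp: min_def max_def split: if_splits)

lemma grid_V_between:
  assumes "(a,b,c) \<in> grid_V k1 k2 k3" "(a',b',c') \<in> grid_V k1 k2 k3"
    and "min a a' \<le> a''" "a'' \<le> max a a'" "min b b' \<le> b''" "b'' \<le> max b b'"
      "min c c' \<le> c''" "c'' \<le> max c c'"
  shows "(a'',b'',c'') \<in> grid_V k1 k2 k3"
  using assms between_bounds[of 0 a k1 a' a''] between_bounds[of 0 b k2 b' b'']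
    between_bounds[of 0 c k3 c' c'']
  unfolding grid_V_iff by blast

lemma in_box_between:
  assumes "in_box (a,b,c) bx" "in_box (a',b',c') bx"
    and "min a a' \<le> a''" "a'' \<le> max a a'" "min b b' \<le> b''" "b'' \<le> max b b'"
      "min c c' \<le> c''" "c'' \<le> max c c'"
  shows "in_box (a'',b'',c'') bx"
proof -
  obtain a1 b1 c1 a2 b2 c2 where bx: "bx = ((a1,b1,c1),(a2,b2,c2))" by (metis prod.exhaust)
  show ?thesis
    using assms between_bounds[of a1 a a2 a' a''] between_bounds[of b1 b b2 b' b'']
      between_bounds[of c1 c c2 c' c'']
    unfolding bx in_box_def by (simp only: prod.case)
qed

lemma tV_step_towards:
  assumes v: "v \<in> tV k1 k2 k3 B" and w: "w \<in> tV k1 k2 k3 B" and "v \<noteq> w"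
  shows "\<exists>v'. v' \<in> tV k1 k2 k3 B \<and> tadj k1 k2 k3 B v v' \<and> tdist v' w = tdist v w - 1"
proof -
  obtain a b c p a' b' c' q where vw: "v = ((a,b,c),p)" "w = ((a',b',c'),q)"
    by (metis prod.exhaust)
  consider (leave_box) i where "p = Some i" "p \<noteq> q"
    | (enter_box) "(a,b,c) = (a',b',c')" "p = None"
    | (move) "(a,b,c) \<noteq> (a',b',c')" "p = None \<or> p = q"
    using \<open>v \<noteq> w\<close> vw by (cases p) auto
  then show ?thesis
  proof cases
    case leave_box
    then have "((a,b,c),None) \<in> tV k1 k2 k3 B" using v vw by (simp add: tV_Some_iff tV_None_iff)
    then show ?thesis using leave_box v vw
      by (intro exI[of _ "((a,b,c),None)"]) (auto simp: tadj_iff tdist_simp layer_dist_def)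
  next
    case enter_box
    then show ?thesis using v w vw \<open>v \<noteq> w\<close>
      by (intro exI[of _ w]) (auto simp: tadj_iff tdist_simp layer_dist_def)
  next
    case move
    obtain a'' b'' c'' where step: "grid_adj (a,b,c) (a'',b'',c'')"
      "min a a' \<le> a''" "a'' \<le> max a a'" "min b b' \<le> b''" "b'' \<le> max b b'"
      "min c c' \<le> c''" "c'' \<le> max c c'"
      "\<bar>a'' - a'\<bar> + \<bar>b'' - b'\<bar> + \<bar>c'' - c'\<bar> = \<bar>a - a'\<bar> + \<bar>b - b'\<bar> + \<bar>c - c'\<bar> - 1"
      using grid_step_towards[OF move(1)] by blast
    have "(a'',b'',c'') \<in> grid_V k1 k2 k3"
      using grid_V_between[OF _ _ step(2-7)] tV_grid_V v w vw by blast
    moreover have "in_box (a'',b'',c'') (B!i)" if "p = Some i" for i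
    proof -
      have "p = Some i" "q = Some i" using that move(2) by auto
      then show ?thesis
        using in_box_between[where bx = "B!i", OF _ _ step(2-7)] v w vw by (simp add: tV_Some_iff)
    qed
    ultimately have "((a'',b'',c''),p) \<in> tV k1 k2 k3 B"
      using v vw by (cases p) (simp_all add: tV_None_iff tV_Some_iff)
    then show ?thesis using v vw step(1,8)
      by (intro exI[of _ "((a'',b'',c''),p)"]) (auto simp: tadj_iff tdist_simp)
  qed
qed

lemma gdist_tadj:
  assumes "v \<in> tV k1 k2 k3 B" "w \<in> tV k1 k2 k3 B"
  shows "gdist (tadj k1 k2 k3 B) v w = nat (tdist v w)"
proof (rule gdist_eq_metric[where V = "tV k1 k2 k3 B"])
  show "\<exists>x'. x' \<in> tV k1 k2 k3 B \<and> tadj k1 k2 k3 B x x' \<and> tdist x' w = tdist x w - 1"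
    if "x \<in> tV k1 k2 k3 B" "x \<noteq> w" for x
    using tV_step_towards[OF that(1) assms(2) that(2)] .
qed (use assms in \<open>auto simp: tadj_tdist tdist_triangle tdist_self tdist_nonneg\<close>)

section \<open>\<open>\<Theta>\<close>-classes are hyperplanes\<close>

definition coord :: "nat \<Rightarrow> vtx \<Rightarrow> int" where
  "coord d v = (case fst v of (a,b,c) \<Rightarrow> if d = 0 then a else if d = 1 then b else c)"

lemma coord_simps [simp]:
  "coord 0 ((a,b,c),p) = a" "coord 1 ((a,b,c),p) = b" "coord (Suc 0) ((a,b,c),p) = b"
  "coord 2 ((a,b,c),p) = c"
  by (simp_all add: coord_def)

lemma vtx_eq_iff_coord:
  "x = y \<longleftrightarrow> coord 0 x = coord 0 y \<and> coord 1 x = coord 1 y \<and> coord 2 x = coord 2 y \<and> snd x = snd y"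
  by (cases x; cases y) (auto simp: coord_def)

lemma vtx_eqI_coord:
  assumes "d < 3" "snd x = snd y" "\<forall>d'<3. d' \<noteq> d \<longrightarrow> coord d' x = coord d' y"
    "coord d x = coord d y"
  shows "x = y"
proof -
  have "d = 0 \<or> d = 1 \<or> d = 2" using assms(1) by auto
  then show ?thesis using assms(2-4) unfolding vtx_eq_iff_coord by auto
qed

lemma tdist_coord: "tdist x y = \<bar>coord 0 x - coord 0 y\<bar> + \<bar>coord 1 x - coord 1 y\<bar> +
    \<bar>coord 2 x - coord 2 y\<bar> + layer_dist (snd x) (snd y)"
  by (cases x; cases y) (auto simp: coord_def tdist_def)

text \<open>\<open>Grid d t\<close> is the class of the edges, in any layer, between points whose \<open>d\<close>-th
  coordinates are \<open>t\<close> and \<open>t + 1\<close>; \<open>Box i\<close> is the class of the edges \<open>u (u, i)\<close>.\<close>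

datatype hyperplane = Grid nat int | Box nat

definition edge_label :: "vtx \<times> vtx \<Rightarrow> hyperplane" where
  "edge_label e = (case e of (x,y) \<Rightarrow>
     if snd x \<noteq> snd y then Box (the (if snd x = None then snd y else snd x))
     else if coord 0 x \<noteq> coord 0 y then Grid 0 (min (coord 0 x) (coord 0 y))
     else if coord 1 x \<noteq> coord 1 y then Grid 1 (min (coord 1 x) (coord 1 y))
     else Grid 2 (min (coord 2 x) (coord 2 y)))"

fun direction :: "hyperplane \<Rightarrow> nat + nat" where
  "direction (Grid d t) = Inl d"
| "direction (Box i) = Inr i"

lemma tadj_cases:
  assumes "tadj k1 k2 k3 B x y"
  shows "(snd x = snd y \<and> \<bar>coord 0 x - coord 0 y\<bar> = 1 \<and> coord 1 x = coord 1 y \<and> coord 2 x = coord 2 y) \<or>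
         (snd x = snd y \<and> coord 0 x = coord 0 y \<and> \<bar>coord 1 x - coord 1 y\<bar> = 1 \<and> coord 2 x = coord 2 y) \<or>
         (snd x = snd y \<and> coord 0 x = coord 0 y \<and> coord 1 x = coord 1 y \<and> \<bar>coord 2 x - coord 2 y\<bar> = 1) \<or>
         (coord 0 x = coord 0 y \<and> coord 1 x = coord 1 y \<and> coord 2 x = coord 2 y \<and>
            (\<exists>i. (snd x = None \<and> snd y = Some i) \<or> (snd x = Some i \<and> snd y = None)))"
proof -
  obtain a b c p a' b' c' q where xy: "x = ((a,b,c),p)" "y = ((a',b',c'),q)"
    by (metis prod.exhaust)
  show ?thesis using assms unfolding xy tadj_iff grid_adj_iff
    by (cases p; cases q) auto
qed

definition abs_cross :: "int \<Rightarrow> int \<Rightarrow> int \<Rightarrow> int \<Rightarrow> int" where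
  "abs_cross a b c d = \<bar>a - c\<bar> + \<bar>b - d\<bar> - \<bar>a - d\<bar> - \<bar>b - c\<bar>"

definition layer_cross :: "nat option \<Rightarrow> nat option \<Rightarrow> nat option \<Rightarrow> nat option \<Rightarrow> int" where
  "layer_cross p q r s = layer_dist p r + layer_dist q s - layer_dist p s - layer_dist q r"

lemma abs_cross_same [simp]: "abs_cross a a c d = 0" "abs_cross a b c c = 0"
  by (auto simp: abs_cross_def)

lemma layer_cross_same [simp]: "layer_cross p p r s = 0" "layer_cross p q r r = 0"
  by (auto simp: layer_cross_def)

lemma abs_cross_unit_eq_0_iff:
  "\<bar>a - b\<bar> = 1 \<Longrightarrow> \<bar>c - d\<bar> = 1 \<Longrightarrow> abs_cross a b c d = 0 \<longleftrightarrow> min a b \<noteq> min c d"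
  unfolding abs_cross_def by (auto simp: abs_if min_def split: if_splits)

lemma layer_cross_box_eq_0_iff:
  "layer_cross None (Some i) None (Some j) = 0 \<longleftrightarrow> i \<noteq> j"
  "layer_cross None (Some i) (Some j) None = 0 \<longleftrightarrow> i \<noteq> j"
  "layer_cross (Some i) None None (Some j) = 0 \<longleftrightarrow> i \<noteq> j"
  "layer_cross (Some i) None (Some j) None = 0 \<longleftrightarrow> i \<noteq> j"
  by (auto simp: layer_cross_def layer_dist_def)

lemma tdist_four_point: "tdist x z + tdist y w - tdist x w - tdist y z =
   abs_cross (coord 0 x) (coord 0 y) (coord 0 z) (coord 0 w) +
   abs_cross (coord 1 x) (coord 1 y) (coord 1 z) (coord 1 w) +
   abs_cross (coord 2 x) (coord 2 y) (coord 2 z) (coord 2 w) +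
   layer_cross (snd x) (snd y) (snd z) (snd w)"
  by (simp add: tdist_coord abs_cross_def layer_cross_def)

lemma tdist_four_point_neq_0_iff:
  assumes "tadj k1 k2 k3 B x y" "tadj k1 k2 k3 B z w"
  shows "tdist x z + tdist y w - tdist x w - tdist y z \<noteq> 0 \<longleftrightarrow> edge_label (x,y) = edge_label (z,w)"
  unfolding tdist_four_point
  using tadj_cases[OF assms(1)] tadj_cases[OF assms(2)]
  by (elim disjE conjE exE)
    (simp_all add: edge_label_def abs_cross_unit_eq_0_iff layer_cross_box_eq_0_iff, auto)

lemma theta_tadj_iff:
  assumes e: "tadj k1 k2 k3 B x y" and f: "tadj k1 k2 k3 B z w"
  shows "theta (tadj k1 k2 k3 B) (x,y) (z,w) \<longleftrightarrow> edge_label (x,y) = edge_label (z,w)"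
proof -
  have "x \<in> tV k1 k2 k3 B" "y \<in> tV k1 k2 k3 B" "z \<in> tV k1 k2 k3 B" "w \<in> tV k1 k2 k3 B"
    using e f tadj_in_tV by auto
  then have "theta (tadj k1 k2 k3 B) (x,y) (z,w) \<longleftrightarrow>
      nat (tdist x z) + nat (tdist y w) \<noteq> nat (tdist x w) + nat (tdist y z)"
    by (simp add: theta_def gdist_tadj)
  also have "\<dots> \<longleftrightarrow> tdist x z + tdist y w - tdist x w - tdist y z \<noteq> 0"
    using tdist_nonneg[of x z] tdist_nonneg[of y w] tdist_nonneg[of x w] tdist_nonneg[of y z]
    by linarith
  finally show ?thesis using tdist_four_point_neq_0_iff[OF e f] by simp
qed

definition class_label :: "(vtx \<times> vtx) set \<Rightarrow> hyperplane" where
  "class_label C = edge_label (SOME e. e \<in> C)"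

lemma theta_class_eq:
  assumes "C \<in> theta_classes (tadj k1 k2 k3 B)"
  shows "C = {e \<in> dedges (tadj k1 k2 k3 B). edge_label e = class_label C}" "C \<noteq> {}"
proof -
  from assms obtain e0 where e0: "e0 \<in> dedges (tadj k1 k2 k3 B)"
    and C: "C = {(e,f). e \<in> dedges (tadj k1 k2 k3 B) \<and> f \<in> dedges (tadj k1 k2 k3 B) \<and>
                 theta (tadj k1 k2 k3 B) e f} `` {e0}"
    unfolding theta_classes_def quotient_def by blast
  have C_label: "C = {e \<in> dedges (tadj k1 k2 k3 B). edge_label e = edge_label e0}"
    unfolding C using e0 theta_tadj_iff by (auto simp: dedges_def)
  then have "e0 \<in> C" using e0 by simp
  then have "class_label C = edge_label e0"
    unfolding class_label_def using someI[of "\<lambda>e. e \<in> C"] C_label by auto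
  then show "C = {e \<in> dedges (tadj k1 k2 k3 B). edge_label e = class_label C}" using C_label by simp
  show "C \<noteq> {}" using \<open>e0 \<in> C\<close> by blast
qed

lemma mem_theta_class_iff:
  "C \<in> theta_classes (tadj k1 k2 k3 B) \<Longrightarrow>
    (x,y) \<in> C \<longleftrightarrow> tadj k1 k2 k3 B x y \<and> edge_label (x,y) = class_label C"
  by (subst theta_class_eq(1)) (auto simp: dedges_def)

section \<open>Cliques of the pointed contact graph\<close>

lemma edge_label_BoxD:
  assumes "tadj k1 k2 k3 B x y" "edge_label (x,y) = Box i"
  shows "(fst x, Some i) \<in> tV k1 k2 k3 B \<and> fst y = fst x \<and>
     ((snd x = None \<and> snd y = Some i) \<or> (snd x = Some i \<and> snd y = None))"
proof -
  obtain u p u' q where xy: "x = (u,p)" "y = (u',q)" by (metis prod.exhaust)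
  have "(u,p) \<in> tV k1 k2 k3 B" "(u',q) \<in> tV k1 k2 k3 B"
    using assms(1) tadj_in_tV xy by auto
  moreover have "u = u' \<and> p \<noteq> q \<and> (p = None \<or> q = None)"
    using assms unfolding xy tadj_iff by (auto simp: edge_label_def split: if_splits)
  ultimately show ?thesis using assms(2) unfolding xy
    by (cases p; cases q) (auto simp: edge_label_def)
qed

lemma edge_label_GridD:
  assumes "tadj k1 k2 k3 B x y" "edge_label (x,y) = Grid d t"
  shows "d < 3 \<and> snd x = snd y \<and> \<bar>coord d x - coord d y\<bar> = 1 \<and>
    (\<forall>d'<3. d' \<noteq> d \<longrightarrow> coord d' x = coord d' y)"
proof -
  have "d' < 3 \<longleftrightarrow> d' = 0 \<or> d' = 1 \<or> d' = 2" for d' :: nat by auto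
  then show ?thesis
    using tadj_cases[OF assms(1)] assms(2)
    by (elim disjE conjE exE) (auto simp: edge_label_def split: if_splits)
qed

lemma tV_coord_nonneg: "v \<in> tV k1 k2 k3 B \<Longrightarrow> 0 \<le> coord d v"
  using tV_grid_V[of "fst v" "snd v"] by (auto simp: coord_def grid_V_def split: prod.splits)

lemma tdist_origin:
  "v \<in> tV k1 k2 k3 B \<Longrightarrow>
    tdist v ((0,0,0),None) = coord 0 v + coord 1 v + coord 2 v + layer_dist (snd v) None"
  using tV_coord_nonneg[of v k1 k2 k3 B] by (simp add: tdist_coord)

lemma outward_Grid_edge_coord:
  assumes "tadj k1 k2 k3 B s x" "edge_label (s,x) = Grid d t"
    and "tdist s ((0,0,0),None) < tdist x ((0,0,0),None)"
  shows "coord d x = coord d s + 1"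
proof -
  have e: "d < 3" "snd s = snd x" "\<bar>coord d s - coord d x\<bar> = 1"
    "\<forall>d'<3. d' \<noteq> d \<longrightarrow> coord d' s = coord d' x"
    using edge_label_GridD[OF assms(1,2)] by auto
  have "s \<in> tV k1 k2 k3 B" "x \<in> tV k1 k2 k3 B" using assms(1) tadj_in_tV by auto
  moreover have "d = 0 \<or> d = 1 \<or> d = 2" using e(1) by auto
  ultimately show ?thesis using assms(3) e(2-4) by (auto simp: tdist_origin)
qed

lemma outward_edges_eq_if_same_direction:
  assumes sx: "tadj k1 k2 k3 B s x" and sy: "tadj k1 k2 k3 B s y"
    and dir: "direction (edge_label (s,x)) = direction (edge_label (s,y))"
    and out: "tdist s ((0,0,0),None) < tdist x ((0,0,0),None)"
      "tdist s ((0,0,0),None) < tdist y ((0,0,0),None)"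
  shows "x = y"
proof (cases "edge_label (s,x)")
  case (Box i)
  then have "edge_label (s,y) = Box i" using dir by (cases "edge_label (s,y)") auto
  then show ?thesis using edge_label_BoxD[OF sx Box] edge_label_BoxD[OF sy] by (auto simp: prod_eq_iff)
next
  case (Grid d t)
  then obtain t' where y_label: "edge_label (s,y) = Grid d t'" using dir by (cases "edge_label (s,y)") auto
  have "coord d x = coord d y"
    using outward_Grid_edge_coord[OF sx Grid out(1)] outward_Grid_edge_coord[OF sy y_label out(2)]
    by simp
  then show ?thesis
    using edge_label_GridD[OF sx Grid] edge_label_GridD[OF sy y_label] vtx_eqI_coord[of d x y]
    by auto
qed

lemma is_4cycle_not_one_direction:
  assumes cyc: "is_4cycle (tadj k1 k2 k3 B) x1 x2 x3 x4"
    and "direction (edge_label (x1,x2)) = direction (edge_label (x2,x3))"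
    and "direction (edge_label (x2,x3)) = direction (edge_label (x3,x4))"
    and "direction (edge_label (x3,x4)) = direction (edge_label (x4,x1))"
  shows False
proof -
  have e: "tadj k1 k2 k3 B x1 x2" "tadj k1 k2 k3 B x2 x3" "tadj k1 k2 k3 B x3 x4"
      "tadj k1 k2 k3 B x4 x1"
    and distinct: "x1 \<noteq> x3" "x2 \<noteq> x4"
    using cyc unfolding is_4cycle_def by auto
  show False
  proof (cases "edge_label (x1,x2)")
    case (Box i)
    then have "edge_label (x2,x3) = Box i" using assms(2) by (cases "edge_label (x2,x3)") auto
    then have "x1 = x3" using edge_label_BoxD[OF e(1) Box] edge_label_BoxD[OF e(2)] by (auto simp: prod_eq_iff)
    then show False using distinct by simp
  next
    case (Grid d t1)
    then obtain t2 where l2: "edge_label (x2,x3) = Grid d t2"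
      using assms(2) by (cases "edge_label (x2,x3)") auto
    then obtain t3 where l3: "edge_label (x3,x4) = Grid d t3"
      using assms(3) by (cases "edge_label (x3,x4)") auto
    then obtain t4 where l4: "edge_label (x4,x1) = Grid d t4"
      using assms(4) by (cases "edge_label (x4,x1)") auto
    note e1 = edge_label_GridD[OF e(1) Grid] and e2 = edge_label_GridD[OF e(2) l2]
      and e3 = edge_label_GridD[OF e(3) l3] and e4 = edge_label_GridD[OF e(4) l4]
    have "coord d x1 \<noteq> coord d x3"
      using vtx_eqI_coord[of d x1 x3] e1 e2 distinct(1) by auto
    moreover have "coord d x2 \<noteq> coord d x4"
      using vtx_eqI_coord[of d x2 x4] e2 e3 distinct(2) by auto
    ultimately show False using e1 e2 e3 e4 by arith
  qed
qed

lemma contact_adj_direction_neq: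
  assumes C: "C \<in> theta_classes (tadj k1 k2 k3 B)" and D: "D \<in> theta_classes (tadj k1 k2 k3 B)"
    and contact: "contact_adj (tadj k1 k2 k3 B) ((0,0,0),None) C D"
    and origin: "((0,0,0),None) \<in> tV k1 k2 k3 B"
  shows "direction (class_label C) \<noteq> direction (class_label D)"
proof
  assume dir: "direction (class_label C) = direction (class_label D)"
  note memC = mem_theta_class_iff[OF C] and memD = mem_theta_class_iff[OF D]
  from contact consider "crosses (tadj k1 k2 k3 B) C D"
    | s x y where "(s,x) \<in> C" "(s,y) \<in> D"
        "gdist (tadj k1 k2 k3 B) s ((0,0,0),None) < gdist (tadj k1 k2 k3 B) x ((0,0,0),None)"
        "gdist (tadj k1 k2 k3 B) s ((0,0,0),None) < gdist (tadj k1 k2 k3 B) y ((0,0,0),None)"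
    unfolding contact_adj_def by blast
  then show False
  proof cases
    case 1
    then obtain x1 x2 x3 x4 where cyc: "is_4cycle (tadj k1 k2 k3 B) x1 x2 x3 x4"
      and "(x1,x2) \<in> C" "(x3,x4) \<in> C" "(x2,x3) \<in> D" "(x4,x1) \<in> D"
      unfolding crosses_def by blast
    then have "edge_label (x1,x2) = class_label C" "edge_label (x3,x4) = class_label C"
      "edge_label (x2,x3) = class_label D" "edge_label (x4,x1) = class_label D"
      using memC memD by blast+
    then show False using is_4cycle_not_one_direction[OF cyc] dir by simp
  next
    case (2 s x y)
    then have edges: "tadj k1 k2 k3 B s x" "tadj k1 k2 k3 B s y" using memC memD by auto
    then have "s \<in> tV k1 k2 k3 B" "x \<in> tV k1 k2 k3 B" "y \<in> tV k1 k2 k3 B"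
      using tadj_in_tV by auto
    then have "tdist s ((0,0,0),None) < tdist x ((0,0,0),None)"
        "tdist s ((0,0,0),None) < tdist y ((0,0,0),None)"
      using 2(3,4) origin by (simp_all add: gdist_tadj)
    then have "x = y"
      using outward_edges_eq_if_same_direction[OF edges] 2(1,2) memC memD dir by simp
    then have "class_label C = class_label D" using 2(1,2) memC memD by simp
    moreover have "C \<noteq> D" using contact by (simp add: contact_adj_def)
    ultimately show False using theta_class_eq(1)[OF C] theta_class_eq(1)[OF D] by simp
  qed
qed

lemma direction_eq_Inr_iff: "direction h = Inr i \<longleftrightarrow> h = Box i"
  by (cases h) auto

lemma contact_adj_Box_common_point:
  assumes C: "C \<in> theta_classes (tadj k1 k2 k3 B)" and D: "D \<in> theta_classes (tadj k1 k2 k3 B)"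
    and contact: "contact_adj (tadj k1 k2 k3 B) a C D"
    and labels: "class_label C = Box i" "class_label D = Box j"
  shows "\<exists>u. (u, Some i) \<in> tV k1 k2 k3 B \<and> (u, Some j) \<in> tV k1 k2 k3 B"
proof -
  have C_points: "(fst x, Some i) \<in> tV k1 k2 k3 B \<and> (fst y, Some i) \<in> tV k1 k2 k3 B"
    if "(x,y) \<in> C" for x y
    using that edge_label_BoxD[of k1 k2 k3 B x y i] mem_theta_class_iff[OF C] labels(1) by auto
  have D_points: "(fst x, Some j) \<in> tV k1 k2 k3 B \<and> (fst y, Some j) \<in> tV k1 k2 k3 B"
    if "(x,y) \<in> D" for x y
    using that edge_label_BoxD[of k1 k2 k3 B x y j] mem_theta_class_iff[OF D] labels(2) by auto
  from contact consider "crosses (tadj k1 k2 k3 B) C D" | s x y where "(s,x) \<in> C" "(s,y) \<in> D"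
    unfolding contact_adj_def by blast
  then show ?thesis
  proof cases
    case 1
    then obtain x1 x2 x3 where "(x1,x2) \<in> C" "(x2,x3) \<in> D" unfolding crosses_def by blast
    then show ?thesis using C_points D_points by blast
  next
    case 2
    then show ?thesis using C_points D_points by blast
  qed
qed

lemma class_direction_range:
  assumes C: "C \<in> theta_classes (tadj k1 k2 k3 B)"
  shows "direction (class_label C) \<in> Inl ` {..<3} \<union> Inr ` {..<length B}"
proof -
  obtain x y where "(x,y) \<in> C" using theta_class_eq(2)[OF C] by auto
  then have e: "tadj k1 k2 k3 B x y" "edge_label (x,y) = class_label C"
    using mem_theta_class_iff[OF C] by auto
  show ?thesis
  proof (cases "class_label C")
    case (Grid d t)
    then show ?thesis using edge_label_GridD[of k1 k2 k3 B x y d t] e by auto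
  next
    case (Box i)
    then show ?thesis using edge_label_BoxD[of k1 k2 k3 B x y i] e tV_Some_iff by auto
  qed
qed

lemma card_le_omega:
  assumes "I \<subseteq> {..<length B}"
    and "\<forall>i\<in>I. \<forall>j\<in>I. i \<noteq> j \<longrightarrow> box_set (B!i) \<inter> box_set (B!j) \<noteq> {}"
  shows "card I \<le> omega B"
  unfolding omega_def
proof (rule Max_ge)
  show "finite {card I |I. I \<subseteq> {..<length B} \<and>
      (\<forall>i\<in>I. \<forall>j\<in>I. i \<noteq> j \<longrightarrow> box_set (B!i) \<inter> box_set (B!j) \<noteq> {})}"
    by (rule finite_subset[where B = "card ` Pow {..<length B}"]) auto
qed (use assms in blast)

lemma contact_clique_Box_intersect:
  assumes K: "K \<subseteq> theta_classes (tadj k1 k2 k3 B)"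
    and clique: "\<forall>C\<in>K. \<forall>D\<in>K. C \<noteq> D \<longrightarrow> contact_adj (tadj k1 k2 k3 B) a C D"
    and CD: "C \<in> K" "D \<in> K" "class_label C = Box i" "class_label D = Box j" and "i \<noteq> j"
  shows "box_set (B!i) \<inter> box_set (B!j) \<noteq> {}"
proof -
  have "C \<noteq> D" using CD(3,4) \<open>i \<noteq> j\<close> by auto
  then have "contact_adj (tadj k1 k2 k3 B) a C D" using clique CD(1,2) by blast
  then obtain u where "(u, Some i) \<in> tV k1 k2 k3 B" "(u, Some j) \<in> tV k1 k2 k3 B"
    using contact_adj_Box_common_point[OF _ _ _ CD(3,4)] CD(1,2) K by blast
  then have "pt_real u \<in> box_set (B!i) \<inter> box_set (B!j)" using tV_Some_box_set by blast
  then show ?thesis by blast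
qed

lemma card_le_card_Inl_plus_card_vimage_Inr:
  fixes A :: "('a + 'b) set"
  assumes "A \<subseteq> Inl ` L \<union> range Inr" "finite L" "finite (Inr -` A)"
  shows "card A \<le> card L + card (Inr -` A)"
proof -
  have "finite (Inl ` L \<union> Inr ` (Inr -` A))"
    using assms(2,3) by (simp only: finite_Un) (blast intro: finite_imageI)
  moreover have "A \<subseteq> Inl ` L \<union> Inr ` (Inr -` A)" using assms(1) by auto
  ultimately have "card A \<le> card (Inl ` L \<union> Inr ` (Inr -` A))" by (rule card_mono)
  also have "\<dots> \<le> card (Inl ` L :: ('a + 'b) set) + card (Inr ` (Inr -` A) :: ('a + 'b) set)"
    by (rule card_Un_le)
  also have "\<dots> = card L + card (Inr -` A)"
    using card_image[of "Inl :: 'a \<Rightarrow> 'a + 'b" L] card_image[of "Inr :: 'b \<Rightarrow> 'a + 'b" "Inr -` A"]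
    by (simp del: image_vimage_eq)
  finally show ?thesis .
qed

lemma contact_clique_card_le:
  assumes origin: "((0,0,0),None) \<in> tV k1 k2 k3 B"
    and K: "K \<subseteq> theta_classes (tadj k1 k2 k3 B)"
    and clique: "\<forall>C\<in>K. \<forall>D\<in>K. C \<noteq> D \<longrightarrow> contact_adj (tadj k1 k2 k3 B) ((0,0,0), None) C D"
  shows "card K \<le> omega B + 3"
proof -
  define f where "f C = direction (class_label C)" for C
  define I where "I = Inr -` f ` K"
  have inj: "inj_on f K"
  proof (rule inj_onI)
    fix C D assume "C \<in> K" "D \<in> K" "f C = f D"
    then show "C = D"
      using contact_adj_direction_neq[OF _ _ _ origin, of C D] K clique unfolding f_def by blast
  qed
  have dir_range: "f C \<in> Inl ` {..<3} \<union> Inr ` {..<length B}" if "C \<in> K" for C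
    using class_direction_range K that unfolding f_def by blast
  have I_indices: "I \<subseteq> {..<length B}"
  proof
    fix i assume "i \<in> I"
    then obtain C where "C \<in> K" "f C = Inr i" unfolding I_def by auto
    then show "i \<in> {..<length B}" using dir_range[of C] by auto
  qed
  have "box_set (B!i) \<inter> box_set (B!j) \<noteq> {}" if "i \<in> I" "j \<in> I" "i \<noteq> j" for i j
  proof -
    obtain C D where "C \<in> K" "D \<in> K" "f C = Inr i" "f D = Inr j"
      using \<open>i \<in> I\<close> \<open>j \<in> I\<close> unfolding I_def by auto
    then show ?thesis
      using contact_clique_Box_intersect[OF K clique] \<open>i \<noteq> j\<close>
      unfolding f_def direction_eq_Inr_iff by blast
  qed
  then have "card I \<le> omega B" using card_le_omega[OF I_indices] by blast
  have "card K = card (f ` K)" using inj by (simp add: card_image)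
  also have "\<dots> \<le> card {..<3::nat} + card I"
  proof (unfold I_def, rule card_le_card_Inl_plus_card_vimage_Inr)
    show "f ` K \<subseteq> Inl ` {..<3} \<union> range Inr" using dir_range by blast
    show "finite (Inr -` f ` K)" using I_indices unfolding I_def by (rule finite_subset) simp
  qed simp
  finally show ?thesis using \<open>card I \<le> omega B\<close> by simp
qed

section \<open>Degrees\<close>

definition boxes_at :: "int \<Rightarrow> int \<Rightarrow> int \<Rightarrow> box list \<Rightarrow> pt \<Rightarrow> nat set" where
  "boxes_at k1 k2 k3 B u = {i. (u, Some i) \<in> tV k1 k2 k3 B}"

lemma boxes_at_subset: "boxes_at k1 k2 k3 B u \<subseteq> {..<length B}"
  by (auto simp: boxes_at_def tV_Some_iff)

lemma card_boxes_at_le_omega: "card (boxes_at k1 k2 k3 B u) \<le> omega B"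
proof (rule card_le_omega[OF boxes_at_subset], intro ballI impI)
  fix i j assume "i \<in> boxes_at k1 k2 k3 B u" "j \<in> boxes_at k1 k2 k3 B u"
  then have "pt_real u \<in> box_set (B!i) \<inter> box_set (B!j)"
    using tV_Some_box_set unfolding boxes_at_def by blast
  then show "box_set (B!i) \<inter> box_set (B!j) \<noteq> {}" by blast
qed

lemma tadj_same_point_iff:
  "tadj k1 k2 k3 B (u,p) (u,q) \<longleftrightarrow>
    (u,p) \<in> tV k1 k2 k3 B \<and> (u,q) \<in> tV k1 k2 k3 B \<and> p \<noteq> q \<and> (p = None \<or> q = None)"
  by (cases u) (simp add: tadj_iff grid_adj_def)

lemma same_point_neighbours:
  assumes "(u,p) \<in> tV k1 k2 k3 B"
  shows "finite {y. tadj k1 k2 k3 B (u,p) y \<and> fst y = u}"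
    and "card {y. tadj k1 k2 k3 B (u,p) y \<and> fst y = u} \<le> card (boxes_at k1 k2 k3 B u)"
proof -
  let ?S = "{y. tadj k1 k2 k3 B (u,p) y \<and> fst y = u}"
  have S_eq: "?S = (\<lambda>q. (u,q)) ` {q. tadj k1 k2 k3 B (u,p) (u,q)}"
    by (auto simp: image_iff prod_eq_iff)
  have fin: "finite (boxes_at k1 k2 k3 B u)" by (rule finite_subset[OF boxes_at_subset]) simp
  have "finite ?S \<and> card ?S \<le> card (boxes_at k1 k2 k3 B u)"
  proof (cases p)
    case None
    have "{q. tadj k1 k2 k3 B (u,p) (u,q)} \<subseteq> Some ` boxes_at k1 k2 k3 B u"
    proof
      fix q assume "q \<in> {q. tadj k1 k2 k3 B (u,p) (u,q)}"
      then obtain i where "q = Some i" "(u, Some i) \<in> tV k1 k2 k3 B"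
        using None by (cases q) (auto simp: tadj_same_point_iff)
      then show "q \<in> Some ` boxes_at k1 k2 k3 B u" by (simp add: boxes_at_def)
    qed
    then have sub: "?S \<subseteq> (\<lambda>i. (u, Some i)) ` boxes_at k1 k2 k3 B u"
      unfolding S_eq by auto
    have "card ?S \<le> card ((\<lambda>i. (u, Some i)) ` boxes_at k1 k2 k3 B u)"
      using fin sub by (intro card_mono) auto
    also have "\<dots> \<le> card (boxes_at k1 k2 k3 B u)"
      using fin by (rule card_image_le)
    finally show ?thesis using fin sub by (meson finite_imageI finite_subset)
  next
    case (Some j)
    then have sub: "?S \<subseteq> {(u, None)}"
      unfolding S_eq by (auto simp: tadj_same_point_iff)
    then have "card ?S \<le> 1" using card_mono[OF _ sub] by simp
    moreover have "j \<in> boxes_at k1 k2 k3 B u" using assms Some by (simp add: boxes_at_def)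
    then have "1 \<le> card (boxes_at k1 k2 k3 B u)" using fin by (auto simp: Suc_le_eq card_gt_0_iff)
    moreover have "finite ?S" using sub by (rule finite_subset) simp
    ultimately show ?thesis by linarith
  qed
  then show "finite ?S" "card ?S \<le> card (boxes_at k1 k2 k3 B u)" by auto
qed

lemma tadj_neighbour_cases:
  assumes "tadj k1 k2 k3 B ((a,b,c),p) y"
  shows "y \<in> set [((a+1,b,c),p), ((a-1,b,c),p), ((a,b+1,c),p), ((a,b-1,c),p),
      ((a,b,c+1),p), ((a,b,c-1),p)] \<or> fst y = (a,b,c)"
proof -
  obtain a' b' c' q where y: "y = ((a',b',c'),q)" by (metis prod.exhaust)
  have unit: "\<bar>s - s'\<bar> = 1 \<Longrightarrow> s' = s + 1 \<or> s' = s - 1" for s s' :: int by arith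
  show ?thesis
    using assms unit[of a a'] unit[of b b'] unit[of c c'] unfolding y tadj_iff grid_adj_iff by auto
qed

lemma tadj_outward_neighbour_cases:
  assumes "tadj k1 k2 k3 B ((a,b,c),p) y"
    and "tdist ((a,b,c),p) ((0,0,0),None) < tdist y ((0,0,0),None)"
  shows "y \<in> set [((a+1,b,c),p), ((a,b+1,c),p), ((a,b,c+1),p)] \<or> fst y = (a,b,c)"
proof -
  have "((a,b,c),p) \<in> tV k1 k2 k3 B" "y \<in> tV k1 k2 k3 B" using assms(1) tadj_in_tV by auto
  then show ?thesis using tadj_neighbour_cases[OF assms(1)] assms(2) by (auto simp: tdist_origin)
qed

lemma card_le_length_plus_card:
  assumes "A \<subseteq> set xs \<union> S" "finite S"
  shows "card A \<le> length xs + card S"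
proof -
  have "card A \<le> card (set xs \<union> S)" using assms by (intro card_mono) auto
  also have "\<dots> \<le> card (set xs) + card S" by (rule card_Un_le)
  also have "\<dots> \<le> length xs + card S" using card_length[of xs] by simp
  finally show ?thesis .
qed

lemma out_deg_le:
  assumes origin: "((0,0,0),None) \<in> tV k1 k2 k3 B" and v: "v \<in> tV k1 k2 k3 B"
  shows "out_deg (tadj k1 k2 k3 B) ((0,0,0),None) v \<le> omega B + 3"
proof -
  obtain a b c p where v_eq: "v = ((a,b,c),p)" by (metis prod.exhaust)
  let ?S = "{y. tadj k1 k2 k3 B ((a,b,c),p) y \<and> fst y = (a,b,c)}"
  have sub: "{y. tadj k1 k2 k3 B v y \<and>
      gdist (tadj k1 k2 k3 B) v ((0,0,0),None) < gdist (tadj k1 k2 k3 B) y ((0,0,0),None)}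
    \<subseteq> set [((a+1,b,c),p), ((a,b+1,c),p), ((a,b,c+1),p)] \<union> ?S"
  proof
    fix y
    assume "y \<in> {y. tadj k1 k2 k3 B v y \<and>
      gdist (tadj k1 k2 k3 B) v ((0,0,0),None) < gdist (tadj k1 k2 k3 B) y ((0,0,0),None)}"
    then have edge: "tadj k1 k2 k3 B v y"
      and "gdist (tadj k1 k2 k3 B) v ((0,0,0),None) < gdist (tadj k1 k2 k3 B) y ((0,0,0),None)"
      by auto
    moreover have "y \<in> tV k1 k2 k3 B" using edge tadj_in_tV by blast
    ultimately have "tdist v ((0,0,0),None) < tdist y ((0,0,0),None)"
      using v origin by (simp add: gdist_tadj)
    then show "y \<in> set [((a+1,b,c),p), ((a,b+1,c),p), ((a,b,c+1),p)] \<union> ?S"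
      using tadj_outward_neighbour_cases[of k1 k2 k3 B a b c p y] edge v_eq by auto
  qed
  have v': "((a,b,c),p) \<in> tV k1 k2 k3 B" using v v_eq by simp
  have "out_deg (tadj k1 k2 k3 B) ((0,0,0),None) v \<le> 3 + card ?S"
    unfolding out_deg_def using card_le_length_plus_card[OF sub same_point_neighbours(1)[OF v']] by simp
  moreover have "card ?S \<le> omega B"
    using same_point_neighbours(2)[OF v'] card_boxes_at_le_omega by (rule le_trans)
  ultimately show ?thesis by linarith
qed

lemma degree_le:
  assumes v: "v \<in> tV k1 k2 k3 B"
  shows "degree (tadj k1 k2 k3 B) v \<le> omega B + 6"
proof -
  obtain a b c p where v_eq: "v = ((a,b,c),p)" by (metis prod.exhaust)
  let ?S = "{y. tadj k1 k2 k3 B ((a,b,c),p) y \<and> fst y = (a,b,c)}"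
  have sub: "{y. tadj k1 k2 k3 B v y} \<subseteq> set [((a+1,b,c),p), ((a-1,b,c),p), ((a,b+1,c),p),
      ((a,b-1,c),p), ((a,b,c+1),p), ((a,b,c-1),p)] \<union> ?S"
    using tadj_neighbour_cases[of k1 k2 k3 B a b c p] v_eq by blast
  have v': "((a,b,c),p) \<in> tV k1 k2 k3 B" using v v_eq by simp
  have "degree (tadj k1 k2 k3 B) v \<le> 6 + card ?S"
    unfolding degree_def using card_le_length_plus_card[OF sub same_point_neighbours(1)[OF v']] by simp
  moreover have "card ?S \<le> omega B"
    using same_point_neighbours(2)[OF v'] card_boxes_at_le_omega by (rule le_trans)
  ultimately show ?thesis by linarith
qed

theorem lemma4:
  fixes k1 k2 k3 :: int and B :: "box list"
  assumes "k1 \<ge> 1" and "k2 \<ge> 1" and "k3 \<ge> 1"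
    and "\<forall>b \<in> set B. valid_box k1 k2 k3 b"
  shows "(\<forall>v \<in> tV k1 k2 k3 B.
            out_deg (tadj k1 k2 k3 B) ((0,0,0), None) v \<le> omega B + 3)
       \<and> (\<forall>v \<in> tV k1 k2 k3 B. degree (tadj k1 k2 k3 B) v \<le> omega B + 6)
       \<and> (\<forall>K \<subseteq> theta_classes (tadj k1 k2 k3 B).
            (\<forall>C\<in>K. \<forall>D\<in>K. C \<noteq> D \<longrightarrow> contact_adj (tadj k1 k2 k3 B) ((0,0,0), None) C D)
            \<longrightarrow> card K \<le> omega B + 3)"
proof -
  have origin: "((0,0,0),None) \<in> tV k1 k2 k3 B"
    using assms(1-3) by (simp add: tV_None_iff grid_V_iff)
  show ?thesis
    using out_deg_le[OF origin] degree_le contact_clique_card_le[OF origin] by blast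
qed

end
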